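(* Let $\alpha\in(0,1)$, $\epsilon>0$, $b>0$, fix a prior $\rho$ and secrets $s_i,s_j$, and let $\pi$ be a coupling of $P_{X|s_i,\rho}$ and $P_{X|s_j,\rho}$. Let $Y=X+N$ with $N\sim\mathrm{Lap}(b)$ (density $\frac{1}{2b}e^{-|z|/b}$) independent of $(X,S)$. If $$\int e^{-\alpha\frac{|x-x'|}{b}}\,\mathrm{d}\pi(x,x')\ \ge\ e^{(\alpha-1)\epsilon},$$ then $D_\alpha(P_{Y|s_i,\rho}\,\|\,P_{Y|s_j,\rho})\le\epsilon$.
   Context: Setting: a sensitive secret $S$ and real-valued data $X$; for each secret value $s$ and prior belief $\rho$, $X$ given $S=s$ has a density $P_{X|s,\rho}$ on $\mathbb{R}$. The released data $Y=X+N$ has conditional density $P_{Y|S}(y|s,\rho)=\int P_N(y-x)P_{X|S}(x|s,\rho)\,\mathrm{d}x$. For densities $P,Q$ the Rényi divergence of order $\alpha\in(0,1)$ is $D_\alpha(P\|Q)=\frac{1}{\alpha-1}\log\int P(y)^\alpha Q(y)^{1-\alpha}\,\mathrm{d}y$. A coupling of two distributions on $\mathbb{R}$ is a joint distribution on $\mathbb{R}^2$ having them as marginals. *)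

theory Defs
  imports "HOL-Probability.Probability"
begin

definition is_density :: "(real \<Rightarrow> real) \<Rightarrow> bool" where
  "is_density f \<longleftrightarrow> f \<in> borel_measurable lborel \<and> (\<forall>x. 0 \<le> f x)
     \<and> (\<integral>\<^sup>+ x. ennreal (f x) \<partial>lborel) = 1"

definition lap_density :: "real \<Rightarrow> real \<Rightarrow> real" where
  "lap_density b z = exp (- \<bar>z\<bar> / b) / (2 * b)"

text \<open>Density of Y = X + N given S = s and prior rho, N ~ Lap(b) independent.\<close>
definition PY :: "real \<Rightarrow> ('s \<Rightarrow> 'r \<Rightarrow> real \<Rightarrow> real) \<Rightarrow> 's \<Rightarrow> 'r \<Rightarrow> real \<Rightarrow> real" where
  "PY b PX s \<rho> y = (\<integral> x. lap_density b (y - x) * PX s \<rho> x \<partial>lborel)"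

definition renyi_div :: "real \<Rightarrow> (real \<Rightarrow> real) \<Rightarrow> (real \<Rightarrow> real) \<Rightarrow> real" where
  "renyi_div \<alpha> P Q = 1 / (\<alpha> - 1) * ln (\<integral> y. P y powr \<alpha> * Q y powr (1 - \<alpha>) \<partial>lborel)"

definition is_coupling :: "(real \<times> real) measure \<Rightarrow> (real \<Rightarrow> real) \<Rightarrow> (real \<Rightarrow> real) \<Rightarrow> bool" where
  "is_coupling \<pi> f g \<longleftrightarrow> prob_space \<pi> \<and> sets \<pi> = sets borel
     \<and> distr \<pi> lborel fst = density lborel f \<and> distr \<pi> lborel snd = density lborel g"

end

theory Submission
  imports Defs
begin

text \<open>
  By the triangle inequality the Laplace density L satisfies
  L(y - x') e^{-\<alpha>|x - x'|/b} \<le> L(y - x)^\<alpha> L(y - x')^{1-\<alpha>}.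
  Integrating against the coupling \<pi> and applying Hoelder's inequality
  on the right bounds the left side by P_Y(y|s_i)^\<alpha> P_Y(y|s_j)^{1-\<alpha>}, because
  each P_Y(\<cdot>|s) is the \<pi>-mixture of the shifted densities L(\<cdot> - x). Integrating
  over y and using \<integral> L = 1 (Fubini) turns the left side into
  \<integral> e^{-\<alpha>|x - x'|/b} d\<pi> \<ge> e^{(\<alpha>-1)\<epsilon>}, while the right side is
  e^{(\<alpha>-1) D_\<alpha>}; since \<alpha> - 1 < 0 this gives D_\<alpha> \<le> \<epsilon>.
\<close>

lemma integral_powr_mult_powr_le:
  fixes u v :: "'a \<Rightarrow> real"
  assumes \<theta>: "0 \<le> \<theta>" "\<theta> \<le> 1"
    and u: "integrable M u" "\<And>x. 0 < u x" "0 < integral\<^sup>L M u"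
    and v: "integrable M v" "\<And>x. 0 < v x" "0 < integral\<^sup>L M v"
  shows "integrable M (\<lambda>x. u x powr \<theta> * v x powr (1 - \<theta>))"
    and "(\<integral>x. u x powr \<theta> * v x powr (1 - \<theta>) \<partial>M)
      \<le> integral\<^sup>L M u powr \<theta> * integral\<^sup>L M v powr (1 - \<theta>)"
proof -
  let ?U = "integral\<^sup>L M u" and ?V = "integral\<^sup>L M v"
  let ?c = "?U powr \<theta> * ?V powr (1 - \<theta>)"
  have [measurable]: "u \<in> borel_measurable M" "v \<in> borel_measurable M"
    using u(1) v(1) by auto
  have young: "u x powr \<theta> * v x powr (1 - \<theta>) \<le> ?c * (\<theta> * (u x / ?U) + (1 - \<theta>) * (v x / ?V))"
    for x
  proof -
    have "u x powr \<theta> * v x powr (1 - \<theta>) = ?c * ((u x / ?U) powr \<theta> * (v x / ?V) powr (1 - \<theta>))"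
      using u v by (simp add: powr_divide less_imp_le)
    also have "\<dots> \<le> ?c * (\<theta> * (u x / ?U) + (1 - \<theta>) * (v x / ?V))"
      using u v \<theta> by (intro mult_left_mono Youngs_inequality_0) auto
    finally show ?thesis .
  qed
  have young_nonneg: "0 \<le> \<theta> * (u x / ?U) + (1 - \<theta>) * (v x / ?V)" for x
    using u v \<theta> by (intro add_nonneg_nonneg mult_nonneg_nonneg divide_nonneg_pos) (auto intro: less_imp_le)
  have int_bound: "integrable M (\<lambda>x. ?c * (\<theta> * (u x / ?U) + (1 - \<theta>) * (v x / ?V)))"
    using u(1) v(1) by auto
  show int: "integrable M (\<lambda>x. u x powr \<theta> * v x powr (1 - \<theta>))"
  proof (rule Bochner_Integration.integrable_bound[OF int_bound _ AE_I2])
    show "norm (u x powr \<theta> * v x powr (1 - \<theta>))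
      \<le> norm (?c * (\<theta> * (u x / ?U) + (1 - \<theta>) * (v x / ?V)))" for x
      using young[of x] young_nonneg[of x] by (simp add: abs_mult abs_of_nonneg)
  qed measurable
  have "(\<integral>x. u x powr \<theta> * v x powr (1 - \<theta>) \<partial>M)
      \<le> (\<integral>x. ?c * (\<theta> * (u x / ?U) + (1 - \<theta>) * (v x / ?V)) \<partial>M)"
    by (rule integral_mono[OF int int_bound young])
  also have "\<dots> = ?c"
    using u v by (simp add: integral_add integral_mult_right integral_divide)
  finally show "(\<integral>x. u x powr \<theta> * v x powr (1 - \<theta>) \<partial>M) \<le> ?c" .
qed

lemma (in prob_space) integral_pos:
  fixes f :: "'a \<Rightarrow> real"
  assumes "integrable M f" "\<And>x. 0 < f x"
  shows "0 < integral\<^sup>L M f"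
proof -
  have nonneg: "AE x in M. 0 \<le> f x"
    by (intro AE_I2 less_imp_le assms(2))
  have "\<not> (AE x in M. f x = 0)"
    using assms(2) by (simp add: less_le AE_False)
  then have "integral\<^sup>L M f \<noteq> 0"
    using integral_nonneg_eq_0_iff_AE[OF assms(1) nonneg] by simp
  then show ?thesis
    using integral_nonneg_AE[OF nonneg] by simp
qed

lemma integral_mult_density_eq_integral_distr:
  assumes [measurable]: "T \<in> borel_measurable M"
    and [measurable]: "p \<in> borel_measurable borel" "f \<in> borel_measurable borel"
    and "distr M lborel T = density lborel p" "\<And>x. 0 \<le> p x"
  shows "(\<integral>x. f x * p x \<partial>lborel) = (\<integral>z. f (T z) \<partial>M)"
proof -
  have "(\<integral>x. f x * p x \<partial>lborel) = (\<integral>x. f x \<partial>density lborel p)"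
    using assms(5) by (subst integral_density) (auto simp: mult.commute)
  also have "\<dots> = (\<integral>x. f x \<partial>distr M lborel T)"
    by (simp add: assms(4))
  also have "\<dots> = (\<integral>z. f (T z) \<partial>M)"
    by (rule integral_distr) measurable
  finally show ?thesis .
qed

lemma lap_density_pos: "0 < b \<Longrightarrow> 0 < lap_density b z"
  by (simp add: lap_density_def)

lemma lap_density_le: "0 < b \<Longrightarrow> lap_density b z \<le> 1 / (2 * b)"
  by (simp add: lap_density_def divide_right_mono)

lemma borel_measurable_lap_density[measurable]: "lap_density b \<in> borel_measurable borel"
  unfolding lap_density_def by measurable

lemma nn_integral_lap_density:
  assumes b: "0 < b"
  shows "(\<integral>\<^sup>+y. lap_density b (y - c) \<partial>lborel) = 1"
proof -
  let ?E = "exponential_density (1 / b)"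
  have E: "(\<integral>\<^sup>+y. ?E y \<partial>lborel) = 1"
    using prob_space.emeasure_space_1[OF prob_space_exponential_density, of "1 / b"] b
    by (simp add: emeasure_density)
  have E_reflect: "(\<integral>\<^sup>+y. ?E (- y) \<partial>lborel) = 1"
    using E by (subst (asm) lborel_distr_uminus[symmetric]) (simp add: nn_integral_distr)
  \<comment> \<open>away from 0 the Laplace density is the average of an exponential density and its reflection\<close>
  have "AE y in lborel. ennreal (lap_density b y) = ennreal (1 / 2) * (?E y + ?E (- y))"
    using AE_lborel_singleton[of 0]
  proof eventually_elim
    case (elim y)
    have "lap_density b y = 1 / 2 * (?E y + ?E (- y))"
      using elim b by (auto simp: lap_density_def exponential_density_def)
    moreover have "0 \<le> ?E y" "0 \<le> ?E (- y)"
      using b by (simp_all add: exponential_density_nonneg)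
    ultimately show ?case
      by (simp only: ennreal_mult[of "1 / 2"] ennreal_plus)
  qed
  then have "(\<integral>\<^sup>+y. lap_density b y \<partial>lborel) = ennreal (1 / 2) * (1 + 1)"
    using b by (simp add: nn_integral_cong_AE nn_integral_cmult nn_integral_add
        exponential_density_nonneg E E_reflect)
  also have "\<dots> = ennreal (1 / 2 * (1 + 1))"
    by (simp only: ennreal_mult ennreal_plus ennreal_1)
  also have "\<dots> = 1"
    by simp
  finally show ?thesis
    using nn_integral_real_affine[of "\<lambda>y. ennreal (lap_density b (y - c))" 1 c] by simp
qed

lemma lap_density_mult_exp_le:
  assumes "0 < b"
  shows "lap_density b u * exp (- \<bar>u - v\<bar> / b) \<le> lap_density b v"
proof -
  have "\<bar>v\<bar> / b \<le> (\<bar>u\<bar> + \<bar>u - v\<bar>) / b"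
    using assms by (intro divide_right_mono) auto
  then have "- \<bar>u\<bar> / b + - \<bar>u - v\<bar> / b \<le> - \<bar>v\<bar> / b"
    by (simp add: add_divide_distrib)
  then show ?thesis
    using assms by (simp add: lap_density_def divide_right_mono flip: exp_add)
qed

lemma lap_density_mult_exp_le_powr:
  assumes "0 < b" "0 \<le> \<alpha>"
  shows "lap_density b (y - x') * exp (- \<alpha> * \<bar>x - x'\<bar> / b)
    \<le> lap_density b (y - x) powr \<alpha> * lap_density b (y - x') powr (1 - \<alpha>)"
proof -
  let ?u = "lap_density b (y - x)" and ?v = "lap_density b (y - x')"
  have v_pos: "0 < ?v"
    using assms by (simp add: lap_density_pos)
  have "?v * exp (- \<alpha> * \<bar>x - x'\<bar> / b)
      = (?v * exp (- \<bar>x - x'\<bar> / b)) powr \<alpha> * ?v powr (1 - \<alpha>)"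
    using v_pos by (simp add: powr_mult exp_powr_real powr_add[symmetric] mult_ac)
  also have "\<dots> \<le> ?u powr \<alpha> * ?v powr (1 - \<alpha>)"
    using lap_density_mult_exp_le[OF assms(1), of "y - x'" "y - x"] v_pos assms
    by (intro mult_right_mono powr_mono2) auto
  finally show ?thesis .
qed

lemma (in finite_measure) integrable_lap_density:
  assumes "0 < b" and [measurable]: "T \<in> borel_measurable M"
  shows "integrable M (\<lambda>z. lap_density b (y - T z))"
  using assms lap_density_pos lap_density_le
  by (intro integrable_const_bound[where B = "1 / (2 * b)"] AE_I2) (simp_all add: abs_of_pos)

lemma (in sigma_finite_measure) has_bochner_integral_lap_mixture:
  assumes "0 < b" and [measurable]: "T \<in> borel_measurable M"
    and g: "integrable M g" "\<And>z. 0 \<le> g z"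
  shows "has_bochner_integral lborel
    (\<lambda>y. \<integral>z. lap_density b (y - T z) * g z \<partial>M) (integral\<^sup>L M g)"
proof -
  interpret pair_sigma_finite M lborel
    by (simp add: pair_sigma_finite_def sigma_finite_measure_axioms
        lborel.sigma_finite_measure_axioms)
  have [measurable]: "g \<in> borel_measurable M"
    using g(1) by auto
  have L: "0 \<le> lap_density b t" "lap_density b t \<le> 1 / (2 * b)" for t
    using assms(1) lap_density_pos lap_density_le by (auto intro: less_imp_le)
  have int_y: "integrable M (\<lambda>z. lap_density b (y - T z) * g z)" for y
  proof (rule Bochner_Integration.integrable_bound[OF integrable_mult_right[OF g(1)] _ AE_I2])
    show "norm (lap_density b (y - T z) * g z) \<le> norm (1 / (2 * b) * g z)" for z
      using mult_right_mono[OF L(2) g(2)] L(1) g(2) assms(1) by simp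
  qed measurable
  have "(\<integral>\<^sup>+y. (\<integral>z. lap_density b (y - T z) * g z \<partial>M) \<partial>lborel)
      = (\<integral>\<^sup>+y. (\<integral>\<^sup>+z. lap_density b (y - T z) * g z \<partial>M) \<partial>lborel)"
    using int_y L g(2) by (intro nn_integral_cong nn_integral_eq_integral[symmetric]) auto
  also have "\<dots> = (\<integral>\<^sup>+z. (\<integral>\<^sup>+y. lap_density b (y - T z) * g z \<partial>lborel) \<partial>M)"
    by (rule Fubini') measurable
  also have "\<dots> = (\<integral>\<^sup>+z. g z \<partial>M)"
    using L g(2) nn_integral_lap_density[OF assms(1)]
    by (simp add: ennreal_mult' nn_integral_multc)
  also have "\<dots> = integral\<^sup>L M g"
    using g by (simp add: nn_integral_eq_integral)
  finally show ?thesis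
    using L g(2) by (intro has_bochner_integral_nn_integral integral_nonneg) measurable
qed

lemma (in prob_space) integral_lap_density_mult_exp_le_powr:
  assumes [measurable]: "X \<in> borel_measurable M" "X' \<in> borel_measurable M"
    and \<alpha>: "0 < \<alpha>" "\<alpha> < 1" and b: "0 < b"
  shows "(\<integral>z. lap_density b (y - X' z) * exp (- \<alpha> * \<bar>X z - X' z\<bar> / b) \<partial>M)
    \<le> (\<integral>z. lap_density b (y - X z) \<partial>M) powr \<alpha>
      * (\<integral>z. lap_density b (y - X' z) \<partial>M) powr (1 - \<alpha>)"
proof -
  have L: "0 < lap_density b t" "lap_density b t \<le> 1 / (2 * b)" for t
    using b by (simp_all add: lap_density_pos lap_density_le)
  have "integrable M (\<lambda>z. lap_density b (y - X' z) * exp (- \<alpha> * \<bar>X z - X' z\<bar> / b))"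
    using L \<alpha> b mult_mono[OF L(2), of "exp (- \<alpha> * \<bar>X _ - X' _\<bar> / b)" 1]
    by (intro integrable_const_bound[where B = "1 / (2 * b)"] AE_I2)
      (simp_all add: abs_mult less_imp_le)
  then have "(\<integral>z. lap_density b (y - X' z) * exp (- \<alpha> * \<bar>X z - X' z\<bar> / b) \<partial>M)
      \<le> (\<integral>z. lap_density b (y - X z) powr \<alpha> * lap_density b (y - X' z) powr (1 - \<alpha>) \<partial>M)"
    using lap_density_mult_exp_le_powr[OF b less_imp_le[OF \<alpha>(1)]] integrable_lap_density[OF b] L \<alpha>
    by (intro integral_mono integral_powr_mult_powr_le(1)) (auto simp: integral_pos)
  also have "\<dots> \<le> (\<integral>z. lap_density b (y - X z) \<partial>M) powr \<alpha>
      * (\<integral>z. lap_density b (y - X' z) \<partial>M) powr (1 - \<alpha>)"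
    using integrable_lap_density[OF b] L \<alpha>
    by (intro integral_powr_mult_powr_le(2)) (auto simp: integral_pos)
  finally show ?thesis .
qed

lemma (in prob_space) integral_exp_dist_le_lap_affinity:
  assumes [measurable]: "X \<in> borel_measurable M" "X' \<in> borel_measurable M"
    and \<alpha>: "0 < \<alpha>" "\<alpha> < 1" and b: "0 < b"
  shows "(\<integral>z. exp (- \<alpha> * \<bar>X z - X' z\<bar> / b) \<partial>M)
    \<le> (\<integral>y. (\<integral>z. lap_density b (y - X z) \<partial>M) powr \<alpha>
          * (\<integral>z. lap_density b (y - X' z) \<partial>M) powr (1 - \<alpha>) \<partial>lborel)"
proof -
  define e where "e = (\<lambda>z. exp (- \<alpha> * \<bar>X z - X' z\<bar> / b))"
  define A where "A = (\<lambda>y. \<integral>z. lap_density b (y - X z) \<partial>M)"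
  define B where "B = (\<lambda>y. \<integral>z. lap_density b (y - X' z) \<partial>M)"
  have e: "0 \<le> e z" "e z \<le> 1" for z
    using \<alpha> b by (simp_all add: e_def)
  have "integrable M e"
    using e by (intro integrable_const_bound[where B = 1] AE_I2) (simp_all add: e_def)
  then have e_mixture:
    "has_bochner_integral lborel (\<lambda>y. \<integral>z. lap_density b (y - X' z) * e z \<partial>M) (integral\<^sup>L M e)"
    using has_bochner_integral_lap_mixture[OF b] e(1) by simp
  have A_int: "has_bochner_integral lborel A 1" and B_int: "has_bochner_integral lborel B 1"
    using has_bochner_integral_lap_mixture[OF b, of _ "\<lambda>_. 1"]
    by (simp_all add: A_def B_def prob_space)
  have A_pos: "0 < A y" and B_pos: "0 < B y" for y
    unfolding A_def B_def using b
    by (simp_all add: integral_pos integrable_lap_density lap_density_pos)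
  have inner: "(\<integral>z. lap_density b (y - X' z) * e z \<partial>M) \<le> A y powr \<alpha> * B y powr (1 - \<alpha>)" for y
    unfolding e_def A_def B_def by (rule integral_lap_density_mult_exp_le_powr[OF assms])
  have "integral\<^sup>L M e = (\<integral>y. (\<integral>z. lap_density b (y - X' z) * e z \<partial>M) \<partial>lborel)"
    using e_mixture by (simp add: has_bochner_integral_iff)
  also have "\<dots> \<le> (\<integral>y. A y powr \<alpha> * B y powr (1 - \<alpha>) \<partial>lborel)"
    using e_mixture A_int B_int A_pos B_pos \<alpha> inner
    by (intro integral_mono integral_powr_mult_powr_le(1)) (auto simp: has_bochner_integral_iff)
  finally show ?thesis
    by (simp add: e_def A_def B_def)
qed

lemma renyi_div_le:
  assumes "\<alpha> < 1" "exp ((\<alpha> - 1) * \<epsilon>) \<le> (\<integral>y. P y powr \<alpha> * Q y powr (1 - \<alpha>) \<partial>lborel)"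
  shows "renyi_div \<alpha> P Q \<le> \<epsilon>"
proof -
  let ?I = "\<integral>y. P y powr \<alpha> * Q y powr (1 - \<alpha>) \<partial>lborel"
  have "0 < ?I"
    using assms(2) exp_gt_zero by (rule less_le_trans[rotated])
  then have "(\<alpha> - 1) * \<epsilon> \<le> ln ?I"
    using assms(2) by (simp add: ln_ge_iff)
  then show ?thesis
    using assms(1) by (simp add: renyi_div_def divide_le_eq mult.commute)
qed

theorem proposition1:
  fixes \<alpha> \<epsilon> b :: real
    and PX :: "'s \<Rightarrow> 'r \<Rightarrow> real \<Rightarrow> real"
    and \<rho> :: 'r and s\<^sub>i s\<^sub>j :: 's
    and \<pi> :: "(real \<times> real) measure"
  assumes "0 < \<alpha>" "\<alpha> < 1" "0 < \<epsilon>" "0 < b"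
    and "\<And>s r. is_density (PX s r)"
    and "is_coupling \<pi> (PX s\<^sub>i \<rho>) (PX s\<^sub>j \<rho>)"
    and "(\<integral> z. exp (- \<alpha> * \<bar>fst z - snd z\<bar> / b) \<partial>\<pi>) \<ge> exp ((\<alpha> - 1) * \<epsilon>)"
  shows "renyi_div \<alpha> (PY b PX s\<^sub>i \<rho>) (PY b PX s\<^sub>j \<rho>) \<le> \<epsilon>"
proof -
  have \<pi>: "prob_space \<pi>" "sets \<pi> = sets borel"
    and marginals: "distr \<pi> lborel fst = density lborel (PX s\<^sub>i \<rho>)"
      "distr \<pi> lborel snd = density lborel (PX s\<^sub>j \<rho>)"
    using assms(6) unfolding is_coupling_def by auto
  have [measurable]: "fst \<in> borel_measurable \<pi>" "snd \<in> borel_measurable \<pi>"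
    by (simp_all add: measurable_cong_sets[OF \<pi>(2) refl] flip: borel_prod)
  have [measurable]: "PX s r \<in> borel_measurable borel" and PX_nonneg: "0 \<le> PX s r x" for s r x
    using assms(5) unfolding is_density_def by auto
  have PY_fst: "PY b PX s\<^sub>i \<rho> y = (\<integral>z. lap_density b (y - fst z) \<partial>\<pi>)" for y
    unfolding PY_def
    by (rule integral_mult_density_eq_integral_distr[OF _ _ _ marginals(1) PX_nonneg]) measurable
  have PY_snd: "PY b PX s\<^sub>j \<rho> y = (\<integral>z. lap_density b (y - snd z) \<partial>\<pi>)" for y
    unfolding PY_def
    by (rule integral_mult_density_eq_integral_distr[OF _ _ _ marginals(2) PX_nonneg]) measurable
  have "exp ((\<alpha> - 1) * \<epsilon>)
      \<le> (\<integral>y. PY b PX s\<^sub>i \<rho> y powr \<alpha> * PY b PX s\<^sub>j \<rho> y powr (1 - \<alpha>) \<partial>lborel)"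
    unfolding PY_fst PY_snd
    using assms(7) prob_space.integral_exp_dist_le_lap_affinity[OF \<pi>(1) _ _ assms(1,2,4)]
    by (rule order.trans) measurable
  then show ?thesis
    using assms(2) by (intro renyi_div_le)
qed

end
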